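(* Let $d$ be an integer with $d \ge 2$ and let $\beta \in \mathbb{C} \setminus (\mathbb{R} \cup \{i, -i\})$. Let $h_\beta(x)=(\beta x+1)/(\beta+x)$, $g_\beta(x)=h_\beta(h_\beta(x))$, $f_\beta(x) = g_\beta(x^d)$ and $z = f_\beta'(1)/d$. If $0 < \lvert \beta -1 \rvert / \lvert \beta + 1 \rvert < 1$ and $\lvert \beta \rvert \ne 1$, then (1) $g_\beta'(1)\notin \{0, \infty\}$ and $g_\beta''(1) \ne \infty$; (2) $0 < \lvert z \rvert < 1$ and $z \notin \mathbb{R}$. *)

theory Defs
  imports "HOL-Complex_Analysis.Complex_Analysis"
begin

definition h_beta :: "complex \<Rightarrow> complex \<Rightarrow> complex" where
  "h_beta \<beta> x = (\<beta> * x + 1) / (\<beta> + x)"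

definition g_beta :: "complex \<Rightarrow> complex \<Rightarrow> complex" where
  "g_beta \<beta> x = h_beta \<beta> (h_beta \<beta> x)"

definition f_beta :: "nat \<Rightarrow> complex \<Rightarrow> complex \<Rightarrow> complex" where
  "f_beta d \<beta> x = g_beta \<beta> (x ^ d)"

end

theory Submission
  imports Defs
begin

text \<open>
  \<open>h_beta \<beta>\<close> is the Moebius map of the matrix \<open>[[\<beta>, 1], [1, \<beta>]]\<close>, so \<open>g_beta \<beta>\<close> is the
  Moebius map of its square \<open>[[\<beta>\<^sup>2 + 1, 2\<beta>], [2\<beta>, \<beta>\<^sup>2 + 1]]\<close>; it is holomorphic near 1 with
  \<open>g_beta' 1 = (\<beta>\<^sup>2 - 1)\<^sup>2 / (\<beta> + 1)\<^sup>4 = w\<^sup>2\<close>, where \<open>w = (\<beta> - 1) / (\<beta> + 1)\<close> is the Cayley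
  transform of \<open>\<beta>\<close>. By the chain rule \<open>f_beta' 1 / d = w\<^sup>2\<close>, so its modulus is
  \<open>|w|\<^sup>2 \<in> (0, 1)\<close>. Finally \<open>w\<^sup>2\<close> is real iff \<open>w\<close> is real or purely imaginary, and the Cayley
  transform maps the real line to the real line and the unit circle to the imaginary axis.
\<close>

lemma moebius_compose:
  fixes a b c d a' b' c' d' z :: "'a :: field"
  assumes D: "c * z + d \<noteq> 0"
  shows "moebius a' b' c' d' (moebius a b c d z)
           = moebius (a' * a + b' * c) (a' * b + b' * d) (c' * a + d' * c) (c' * b + d' * d) z"
\<comment> \<open>Only the inner denominator must be nonzero: where the outer one vanishes,
    both sides are \<open>0\<close> by the convention \<open>x / 0 = 0\<close>.\<close>
proof -
  have "a' * moebius a b c d z + b' = ((a' * a + b' * c) * z + (a' * b + b' * d)) / (c * z + d)"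
    and "c' * moebius a b c d z + d' = ((c' * a + d' * c) * z + (c' * b + d' * d)) / (c * z + d)"
    using D by (simp_all add: moebius_def field_simps)
  then show ?thesis
    using D by (simp add: moebius_def[of a' b' c' d'] moebius_def[of _ _ "c' * a + d' * c"])
qed

lemma has_field_derivative_moebius:
  fixes a b c d z :: "'a :: real_normed_field"
  assumes "c * z + d \<noteq> 0"
  shows "(moebius a b c d has_field_derivative (a * d - b * c) / (c * z + d)\<^sup>2) (at z within S)"
proof -
  have "((\<lambda>z. (a * z + b) / (c * z + d)) has_field_derivative
          (a * (c * z + d) - (a * z + b) * c) / (c * z + d)\<^sup>2) (at z within S)"
    using assms by (auto intro!: derivative_eq_intros simp: power2_eq_square)
  moreover have "a * (c * z + d) - (a * z + b) * c = a * d - b * c"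
    by (simp add: algebra_simps)
  ultimately show ?thesis
    by (simp add: moebius_def[abs_def])
qed

lemma h_beta_moebius: "h_beta \<beta> = moebius \<beta> 1 1 \<beta>"
  by (simp add: fun_eq_iff h_beta_def moebius_def add.commute)

lemma g_beta_moebius:
  assumes "\<beta> + z \<noteq> 0"
  shows "g_beta \<beta> z = moebius (\<beta>\<^sup>2 + 1) (2 * \<beta>) (2 * \<beta>) (\<beta>\<^sup>2 + 1) z"
proof -
  have "1 * z + \<beta> \<noteq> 0"
    using assms by (simp add: add.commute)
  then have "g_beta \<beta> z = moebius (\<beta> * \<beta> + 1 * 1) (\<beta> * 1 + 1 * \<beta>) (1 * \<beta> + \<beta> * 1) (1 * 1 + \<beta> * \<beta>) z"
    unfolding g_beta_def h_beta_moebius by (rule moebius_compose)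
  moreover have "\<beta> * \<beta> + 1 * 1 = \<beta>\<^sup>2 + 1" "1 * 1 + \<beta> * \<beta> = \<beta>\<^sup>2 + 1"
    by (simp_all add: power2_eq_square add.commute)
  moreover have "\<beta> * 1 + 1 * \<beta> = 2 * \<beta>" "1 * \<beta> + \<beta> * 1 = 2 * \<beta>"
    by simp_all
  ultimately show ?thesis
    by (simp only:)
qed

lemma g_beta_has_field_derivative:
  assumes "\<beta> + z \<noteq> 0" and "2 * \<beta> * z + (\<beta>\<^sup>2 + 1) \<noteq> 0"
  shows "(g_beta \<beta> has_field_derivative
           ((\<beta>\<^sup>2 + 1) * (\<beta>\<^sup>2 + 1) - 2 * \<beta> * (2 * \<beta>)) / (2 * \<beta> * z + (\<beta>\<^sup>2 + 1))\<^sup>2) (at z)"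
proof (rule has_field_derivative_transform_within_open)
  show "open {z. \<beta> + z \<noteq> 0}"
    by (intro open_Collect_neq continuous_intros)
  show "(moebius (\<beta>\<^sup>2 + 1) (2 * \<beta>) (2 * \<beta>) (\<beta>\<^sup>2 + 1) has_field_derivative
           ((\<beta>\<^sup>2 + 1) * (\<beta>\<^sup>2 + 1) - 2 * \<beta> * (2 * \<beta>)) / (2 * \<beta> * z + (\<beta>\<^sup>2 + 1))\<^sup>2) (at z)"
    by (rule has_field_derivative_moebius[OF assms(2)])
qed (use assms g_beta_moebius in auto)

definition g_beta_domain :: "complex \<Rightarrow> complex set" where
  "g_beta_domain \<beta> = {z. \<beta> + z \<noteq> 0 \<and> 2 * \<beta> * z + (\<beta>\<^sup>2 + 1) \<noteq> 0}"

lemma open_g_beta_domain: "open (g_beta_domain \<beta>)"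
  unfolding g_beta_domain_def by (intro open_Collect_conj open_Collect_neq continuous_intros)

lemma one_in_g_beta_domain:
  assumes "\<beta> + 1 \<noteq> 0"
  shows "1 \<in> g_beta_domain \<beta>"
proof -
  have "2 * \<beta> * 1 + (\<beta>\<^sup>2 + 1) = (\<beta> + 1)\<^sup>2"
    by (simp add: power2_eq_square algebra_simps)
  then show ?thesis
    using assms by (simp add: g_beta_domain_def)
qed

lemma g_beta_holomorphic: "g_beta \<beta> holomorphic_on g_beta_domain \<beta>"
  using g_beta_has_field_derivative
  by (auto simp: g_beta_domain_def holomorphic_on_def field_differentiable_def
      intro: has_field_derivative_at_within)

lemma g_beta_has_field_derivative_at_1:
  assumes "\<beta> + 1 \<noteq> 0"
  shows "(g_beta \<beta> has_field_derivative ((\<beta> - 1) / (\<beta> + 1))\<^sup>2) (at 1)"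
proof -
  have square: "2 * \<beta> * 1 + (\<beta>\<^sup>2 + 1) = (\<beta> + 1)\<^sup>2"
    by (simp add: power2_eq_square algebra_simps)
  have "((\<beta>\<^sup>2 + 1) * (\<beta>\<^sup>2 + 1) - 2 * \<beta> * (2 * \<beta>)) / ((\<beta> + 1)\<^sup>2)\<^sup>2
          = (\<beta> - 1)\<^sup>2 * (\<beta> + 1)\<^sup>2 / ((\<beta> + 1)\<^sup>2 * (\<beta> + 1)\<^sup>2)"
    by (simp add: power2_eq_square algebra_simps)
  also have "\<dots> = (\<beta> - 1)\<^sup>2 / (\<beta> + 1)\<^sup>2"
    using assms by (rule mult_divide_mult_cancel_right[OF power_not_zero])
  also have "\<dots> = ((\<beta> - 1) / (\<beta> + 1))\<^sup>2"
    by (simp add: power_divide)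
  finally show ?thesis
    using g_beta_has_field_derivative[of \<beta> 1] assms square by simp
qed

lemma f_beta_has_field_derivative_at_1:
  assumes "\<beta> + 1 \<noteq> 0"
  shows "(f_beta d \<beta> has_field_derivative of_nat d * ((\<beta> - 1) / (\<beta> + 1))\<^sup>2) (at 1)"
proof -
  have "((\<lambda>x. g_beta \<beta> (x ^ d)) has_field_derivative
          ((\<beta> - 1) / (\<beta> + 1))\<^sup>2 * (of_nat d * 1 ^ (d - 1))) (at 1)"
    using g_beta_has_field_derivative_at_1[OF assms]
    by (intro DERIV_chain2[where f = "g_beta \<beta>"] derivative_eq_intros) auto
  then show ?thesis
    by (simp add: f_beta_def[abs_def] mult.commute)
qed

lemma Re_cayley: "Re ((z - 1) / (z + 1)) = ((cmod z)\<^sup>2 - 1) / (cmod (z + 1))\<^sup>2"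
  unfolding Re_divide' cmod_power2 by (simp add: power2_eq_square algebra_simps)

lemma Im_cayley: "Im ((z - 1) / (z + 1)) = 2 * Im z / (cmod (z + 1))\<^sup>2"
  by (simp add: Im_divide' power2_eq_square algebra_simps)

lemma power2_in_Reals_iff: "(z :: complex)\<^sup>2 \<in> \<real> \<longleftrightarrow> Re z = 0 \<or> Im z = 0"
  by (simp add: complex_is_Real_iff Im_power2)

theorem lemma3p17:
  fixes d :: nat and \<beta> :: complex
  assumes "d \<ge> 2"
    and "\<beta> \<notin> \<real>" and "\<beta> \<noteq> \<i>" and "\<beta> \<noteq> - \<i>"
    and "0 < cmod (\<beta> - 1) / cmod (\<beta> + 1)" and "cmod (\<beta> - 1) / cmod (\<beta> + 1) < 1"
    and "cmod \<beta> \<noteq> 1"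
  shows "((g_beta \<beta>) field_differentiable (at 1) \<and> deriv (g_beta \<beta>) 1 \<noteq> 0
          \<and> (deriv (g_beta \<beta>)) field_differentiable (at 1))
        \<and> (0 < cmod (deriv (f_beta d \<beta>) 1 / of_nat d)
          \<and> cmod (deriv (f_beta d \<beta>) 1 / of_nat d) < 1
          \<and> deriv (f_beta d \<beta>) 1 / of_nat d \<notin> \<real>)"
proof -
  define w where "w = (\<beta> - 1) / (\<beta> + 1)"
  have "\<beta> + 1 \<noteq> 0"
    using assms(5) by auto
  have dg: "(g_beta \<beta> has_field_derivative w\<^sup>2) (at 1)"
    unfolding w_def by (rule g_beta_has_field_derivative_at_1) fact
  have df: "deriv (f_beta d \<beta>) 1 / of_nat d = w\<^sup>2"
    using DERIV_imp_deriv[OF f_beta_has_field_derivative_at_1[OF \<open>\<beta> + 1 \<noteq> 0\<close>]] assms(1)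
    by (simp add: w_def)
  have "deriv (g_beta \<beta>) field_differentiable (at 1)"
    using holomorphic_deriv[OF g_beta_holomorphic open_g_beta_domain]
      open_g_beta_domain one_in_g_beta_domain[OF \<open>\<beta> + 1 \<noteq> 0\<close>]
    by (rule holomorphic_on_imp_differentiable_at)
  moreover have "cmod w = cmod (\<beta> - 1) / cmod (\<beta> + 1)"
    by (simp add: w_def norm_divide)
  moreover have "Re w \<noteq> 0"
    using assms(7) \<open>\<beta> + 1 \<noteq> 0\<close> by (simp add: w_def Re_cayley abs_square_eq_1)
  moreover have "Im w \<noteq> 0"
    using assms(2) \<open>\<beta> + 1 \<noteq> 0\<close> by (simp add: w_def Im_cayley complex_is_Real_iff)
  ultimately show ?thesis
    using dg df DERIV_imp_deriv[OF dg] assms(5,6)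
    by (auto simp: field_differentiable_def norm_power power2_in_Reals_iff power_less_one_iff)
qed

end
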